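(* Let $\Delta$ be a $d$-dimensional pure simplicial forest. Then for every $i<d$, the $(i,d)$-incidence complex $H_\Delta(i,d)$ of $\Delta$ is a simplicial forest.
   Context: A facet $F$ of a simplicial complex $\Delta$ is a leaf if either $F$ is the only facet, or there is a facet $G\neq F$ with $F\cap F'\subseteq F\cap G$ for every facet $F'\neq F$. $\Delta$ is a simplicial tree if it is connected and every subcomplex generated by a nonempty subset of its facets has a leaf; a simplicial forest if each connected component is a simplicial tree. $\Delta$ is pure if all facets have the same dimension. The $(i,j)$-incidence complex $H_\Delta(i,j)$ is the simplicial complex whose vertex set is the set of $i$-dimensional faces of $\Delta$, and whose facets are exactly the sets of the form $\{\tau:\tau\subset\sigma,\ \dim\tau=i\}$ for $\sigma$ a $j$-dimensional face of $\Delta$. *)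

theory Defs
  imports Main
begin

text \<open>A simplicial complex is represented by its (finite) set of facets:
  a finite antichain of finite vertex sets. Faces are subsets of facets;
  a face of cardinality k+1 has dimension k.\<close>

definition simplicial_complex :: "'a set set \<Rightarrow> bool" where
  "simplicial_complex F \<longleftrightarrow> finite F \<and> (\<forall>A\<in>F. finite A) \<and>
     (\<forall>A\<in>F. \<forall>B\<in>F. A \<subseteq> B \<longrightarrow> A = B)"

definition faces :: "'a set set \<Rightarrow> 'a set set" where
  "faces F = {\<tau>. \<exists>\<sigma>\<in>F. \<tau> \<subseteq> \<sigma>}"

definition pure_of_dim :: "'a set set \<Rightarrow> nat \<Rightarrow> bool" where
  "pure_of_dim F d \<longleftrightarrow> (\<forall>\<sigma>\<in>F. card \<sigma> = d + 1)"

definition is_leaf :: "'a set set \<Rightarrow> 'a set \<Rightarrow> bool" where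
  "is_leaf F A \<longleftrightarrow> A \<in> F \<and>
     (F = {A} \<or> (\<exists>G\<in>F. G \<noteq> A \<and> (\<forall>A'\<in>F. A' \<noteq> A \<longrightarrow> A \<inter> A' \<subseteq> A \<inter> G)))"

definition facet_adj :: "'a set set \<Rightarrow> ('a set \<times> 'a set) set" where
  "facet_adj F = {(A, B). A \<in> F \<and> B \<in> F \<and> A \<inter> B \<noteq> {}}"

definition connected_complex :: "'a set set \<Rightarrow> bool" where
  "connected_complex F \<longleftrightarrow> (\<forall>A\<in>F. \<forall>B\<in>F. (A, B) \<in> (facet_adj F)\<^sup>*)"

definition simplicial_tree :: "'a set set \<Rightarrow> bool" where
  "simplicial_tree F \<longleftrightarrow> connected_complex F \<and>
     (\<forall>S. S \<subseteq> F \<and> S \<noteq> {} \<longrightarrow> (\<exists>A. is_leaf S A))"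

definition components :: "'a set set \<Rightarrow> 'a set set set" where
  "components F = {(facet_adj F)\<^sup>* `` {A} | A. A \<in> F}"

definition simplicial_forest :: "'a set set \<Rightarrow> bool" where
  "simplicial_forest F \<longleftrightarrow> (\<forall>C\<in>components F. simplicial_tree C)"

text \<open>The (i,j)-incidence complex: vertices are the i-faces of \<Delta>; its facets
  are the sets of i-faces of the j-faces of \<Delta>.\<close>
definition incidence_complex :: "'a set set \<Rightarrow> nat \<Rightarrow> nat \<Rightarrow> 'a set set set" where
  "incidence_complex F i j =
     (\<lambda>\<sigma>. {\<tau>. \<tau> \<subseteq> \<sigma> \<and> card \<tau> = i + 1}) ` {\<sigma> \<in> faces F. card \<sigma> = j + 1}"

end

theory Submission
  imports Defs
begin

text \<open>As \<open>i \<le> d\<close>, every facet \<open>\<sigma>\<close> of \<open>\<Delta>\<close> is the union of its \<open>i\<close>-faces, so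
  \<open>\<sigma> \<mapsto> {i-faces of \<sigma>}\<close> is a bijection from the facets of \<open>\<Delta>\<close> onto those of
  \<open>H\<^sub>\<Delta>(i,d)\<close>. It commutes with intersections, hence maps a leaf \<open>A\<close> of a
  subfamily (witnessed by \<open>G\<close>) to a leaf witnessed by the image of \<open>G\<close>.
  A complex is a forest exactly when every nonempty family of its facets has
  a leaf, so the forest property transfers along the bijection.\<close>

lemma facet_adj_rtrancl_in:
  assumes "(A, B) \<in> (facet_adj F)\<^sup>*" "A \<in> F"
  shows "B \<in> F"
  using assms by (induction rule: rtrancl_induct) (auto simp: facet_adj_def)

lemma components_subset: "C \<in> components F \<Longrightarrow> C \<subseteq> F"
  unfolding components_def by (auto intro: facet_adj_rtrancl_in)

lemma sym_facet_adj: "sym (facet_adj F)"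
  unfolding facet_adj_def sym_def by auto

lemma connected_complex_components:
  assumes "C \<in> components F"
  shows "connected_complex C"
proof -
  obtain A where C: "C = (facet_adj F)\<^sup>* `` {A}"
    using assms unfolding components_def by auto
  have path: "(A, B) \<in> (facet_adj C)\<^sup>*" if "(A, B) \<in> (facet_adj F)\<^sup>*" for B
    using that
  proof (induction rule: rtrancl_induct)
    case base
    then show ?case by simp
  next
    case (step B B')
    then have "(B, B') \<in> facet_adj C"
      unfolding C facet_adj_def by (auto intro: rtrancl_into_rtrancl)
    with step.IH show ?case by (rule rtrancl_into_rtrancl)
  qed
  show ?thesis
    unfolding connected_complex_def
  proof (intro ballI)
    fix B B' assume "B \<in> C" "B' \<in> C"
    then have "(A, B) \<in> (facet_adj C)\<^sup>*" "(A, B') \<in> (facet_adj C)\<^sup>*"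
      using path unfolding C by simp_all
    then show "(B, B') \<in> (facet_adj C)\<^sup>*"
      using sym_rtrancl[OF sym_facet_adj] by (meson rtrancl_trans symD)
  qed
qed

lemma is_leaf_Un_disjoint:
  assumes leaf: "is_leaf S A" and disjoint: "\<forall>B\<in>R. A \<inter> B = {}"
  shows "is_leaf (S \<union> R) A"
proof -
  have "A \<in> S"
    using leaf unfolding is_leaf_def by simp
  have "S \<union> R = {A} \<or> (\<exists>G\<in>S \<union> R. G \<noteq> A \<and> (\<forall>B\<in>S \<union> R. B \<noteq> A \<longrightarrow> A \<inter> B \<subseteq> A \<inter> G))"
  proof (cases "S = {A}")
    case True
    show ?thesis
    proof (cases "R \<subseteq> {A}")
      case True
      with \<open>S = {A}\<close> show ?thesis by auto
    next
      case False
      then obtain G where "G \<in> R" "G \<noteq> A" by auto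
      with \<open>S = {A}\<close> disjoint show ?thesis by blast
    qed
  next
    case False
    then obtain G where "G \<in> S" "G \<noteq> A" "\<forall>B\<in>S. B \<noteq> A \<longrightarrow> A \<inter> B \<subseteq> A \<inter> G"
      using leaf unfolding is_leaf_def by auto
    with disjoint show ?thesis by blast
  qed
  with \<open>A \<in> S\<close> show ?thesis
    unfolding is_leaf_def by blast
qed

lemma simplicial_forest_iff_leaves:
  "simplicial_forest F \<longleftrightarrow> (\<forall>S. S \<subseteq> F \<and> S \<noteq> {} \<longrightarrow> (\<exists>A. is_leaf S A))"
proof
  assume forest: "simplicial_forest F"
  show "\<forall>S. S \<subseteq> F \<and> S \<noteq> {} \<longrightarrow> (\<exists>A. is_leaf S A)"
  proof (intro allI impI, elim conjE)
    fix S assume "S \<subseteq> F" "S \<noteq> {}"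
    then obtain A0 where "A0 \<in> S" "A0 \<in> F" by auto
    define T where "T = (facet_adj F)\<^sup>* `` {A0}"
    have "T \<in> components F"
      unfolding T_def components_def using \<open>A0 \<in> F\<close> by auto
    with forest have "simplicial_tree T"
      unfolding simplicial_forest_def by blast
    moreover have "S \<inter> T \<subseteq> T" "S \<inter> T \<noteq> {}"
      using \<open>A0 \<in> S\<close> unfolding T_def by auto
    ultimately obtain A where leaf: "is_leaf (S \<inter> T) A"
      unfolding simplicial_tree_def by blast
    then have "A \<in> T" "A \<in> F"
      using \<open>S \<subseteq> F\<close> unfolding is_leaf_def by auto
    have "A \<inter> B = {}" if "B \<in> S - T" for B
    proof (rule ccontr)
      assume "A \<inter> B \<noteq> {}"
      with \<open>A \<in> F\<close> that \<open>S \<subseteq> F\<close> have "(A, B) \<in> facet_adj F"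
        unfolding facet_adj_def by auto
      with \<open>A \<in> T\<close> have "B \<in> T"
        unfolding T_def by (auto intro: rtrancl_into_rtrancl)
      with that show False by simp
    qed
    then have "is_leaf ((S \<inter> T) \<union> (S - T)) A"
      using leaf by (blast intro: is_leaf_Un_disjoint)
    then show "\<exists>A. is_leaf S A"
      by (metis Int_Diff_Un)
  qed
next
  assume "\<forall>S. S \<subseteq> F \<and> S \<noteq> {} \<longrightarrow> (\<exists>A. is_leaf S A)"
  then show "simplicial_forest F"
    unfolding simplicial_forest_def simplicial_tree_def
    using components_subset connected_complex_components by (metis subset_trans)
qed

lemma is_leaf_image:
  assumes leaf: "is_leaf S A"
    and inj: "inj_on f S"
    and Int: "\<And>X Y. f (X \<inter> Y) = f X \<inter> f Y"
  shows "is_leaf (f ` S) (f A)"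
proof (cases "S = {A}")
  case True
  then show ?thesis
    unfolding is_leaf_def by simp
next
  case False
  then obtain G where G: "G \<in> S" "G \<noteq> A"
    and dominates: "\<forall>B\<in>S. B \<noteq> A \<longrightarrow> A \<inter> B \<subseteq> A \<inter> G"
    using leaf unfolding is_leaf_def by auto
  have "A \<in> S"
    using leaf unfolding is_leaf_def by simp
  have f_mono: "f X \<subseteq> f Y" if "X \<subseteq> Y" for X Y
    using Int[of X Y] that by (simp add: Int_absorb2 inf.orderI)
  have "f A \<inter> f B \<subseteq> f A \<inter> f G" if "B \<in> S" "B \<noteq> A" for B
    using f_mono[OF dominates[rule_format, OF that]] by (simp add: Int)
  moreover have "f G \<noteq> f A"
    using inj G \<open>A \<in> S\<close> by (auto dest: inj_onD)
  ultimately show ?thesis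
    unfolding is_leaf_def using G \<open>A \<in> S\<close> by blast
qed

lemma simplicial_forest_image:
  assumes forest: "simplicial_forest F"
    and inj: "inj_on f F"
    and Int: "\<And>X Y. f (X \<inter> Y) = f X \<inter> f Y"
  shows "simplicial_forest (f ` F)"
  unfolding simplicial_forest_iff_leaves
proof (intro allI impI, elim conjE)
  fix S' assume "S' \<subseteq> f ` F" "S' \<noteq> {}"
  then obtain S where "S \<subseteq> F" "S' = f ` S" "S \<noteq> {}"
    by (metis image_empty subset_imageE)
  then obtain A where "is_leaf S A"
    using forest unfolding simplicial_forest_iff_leaves by blast
  then have "is_leaf (f ` S) (f A)"
    using inj_on_subset[OF inj \<open>S \<subseteq> F\<close>] Int by (rule is_leaf_image)
  then show "\<exists>L. is_leaf S' L"
    using \<open>S' = f ` S\<close> by blast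
qed

definition card_subsets :: "'a set \<Rightarrow> nat \<Rightarrow> 'a set set" where
  "card_subsets A k = {B. B \<subseteq> A \<and> card B = k}"

lemma card_subsets_Int: "card_subsets (A \<inter> B) k = card_subsets A k \<inter> card_subsets B k"
  unfolding card_subsets_def by auto

lemma Union_card_subsets:
  assumes "finite A" "0 < k" "k \<le> card A"
  shows "\<Union> (card_subsets A k) = A"
proof
  show "\<Union> (card_subsets A k) \<subseteq> A"
    unfolding card_subsets_def by auto
  show "A \<subseteq> \<Union> (card_subsets A k)"
  proof
    fix x assume "x \<in> A"
    then have "k - 1 \<le> card (A - {x})"
      using assms by simp
    then obtain B where B: "B \<subseteq> A - {x}" "card B = k - 1" "finite B"
      by (rule obtain_subset_with_card_n)
    moreover have "x \<notin> B"
      using B(1) by blast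
    ultimately have "insert x B \<in> card_subsets A k"
      using \<open>x \<in> A\<close> \<open>0 < k\<close> unfolding card_subsets_def by auto
    then show "x \<in> \<Union> (card_subsets A k)"
      by blast
  qed
qed

lemma inj_on_card_subsets:
  assumes "\<And>A. A \<in> F \<Longrightarrow> finite A \<and> k \<le> card A" "0 < k"
  shows "inj_on (\<lambda>A. card_subsets A k) F"
  using assms by (intro inj_on_inverseI[where g = Union]) (simp add: Union_card_subsets)

lemma incidence_complex_pure:
  assumes "simplicial_complex \<Delta>" "pure_of_dim \<Delta> d"
  shows "incidence_complex \<Delta> i d = (\<lambda>\<sigma>. card_subsets \<sigma> (i + 1)) ` \<Delta>"
proof -
  have "\<sigma> \<in> \<Delta>" if "\<sigma> \<subseteq> \<tau>" "\<tau> \<in> \<Delta>" "card \<sigma> = d + 1" for \<sigma> \<tau>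
  proof -
    have "finite \<tau>" "card \<tau> = d + 1"
      using assms that(2) unfolding simplicial_complex_def pure_of_dim_def by auto
    then show ?thesis
      using that card_subset_eq by metis
  qed
  then have "{\<sigma> \<in> faces \<Delta>. card \<sigma> = d + 1} = \<Delta>"
    using assms(2) unfolding faces_def pure_of_dim_def by auto
  then show ?thesis
    unfolding incidence_complex_def card_subsets_def by simp
qed

theorem proposition4p6:
  fixes \<Delta> :: "'a set set" and d i :: nat
  assumes "simplicial_complex \<Delta>"
    and "pure_of_dim \<Delta> d"
    and "simplicial_forest \<Delta>"
    and "i < d"
  shows "simplicial_forest (incidence_complex \<Delta> i d)"
proof -
  have "inj_on (\<lambda>\<sigma>. card_subsets \<sigma> (i + 1)) \<Delta>"
    using assms(1,2,4) unfolding simplicial_complex_def pure_of_dim_def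
    by (intro inj_on_card_subsets) auto
  then have "simplicial_forest ((\<lambda>\<sigma>. card_subsets \<sigma> (i + 1)) ` \<Delta>)"
    by (rule simplicial_forest_image[OF assms(3)]) (rule card_subsets_Int)
  then show ?thesis
    using incidence_complex_pure[OF assms(1,2)] by simp
qed

end
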